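(* Let $T(x)=1+\sum_{n\ge1} t_n x^n$ be the formal power series defined in the context (the cluster generating function for the consecutive pattern $1423$), which satisfies \[T(x) = 1 + \frac{x}{1+x}\,T\!\left(\frac{x}{1+x^2}\right).\] Let $B(x)=\frac{x}{1+x^2}$, $B_0(x)=x$ and $B_j(x)=B(B_{j-1}(x))$ for $j\ge1$. Then this functional equation has the solution \[T(x) = 1 + \sum_{n=0}^\infty \prod_{j=0}^n \frac{B_j(x)}{1+B_j(x)},\] where the infinite sum converges in the ring of formal power series in $x$.
   Context: Let $\sigma=1423$, a consecutive pattern of length $m=4$. An occurrence of $\sigma$ in a permutation $\pi=\pi_1\cdots\pi_n$ is a set of $m$ consecutive positions whose entries are in the same relative order as $\sigma$. A $k$-cluster of length $n\ge m$ is a permutation $\pi$ of $\{1,\dots,n\}$ such that $\pi$ contains precisely $k$ occurrences of $\sigma$, every entry of $\pi$ belongs to at least one occurrence of $\sigma$, and any two successive occurrences of $\sigma$ overlap in at least one position. Let $s_{n,k}$ be the number of $k$-clusters of length $n$, with the additional convention $s_{1,0}=1$ (and $s_{n,k}=0$ for all other $n<m$). Set $t_n=\sum_k (-1)^k s_{n,k}$ and $T(x)=1+\sum_{n\ge1} t_n x^n$. *)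

theory Defs
  imports "HOL-Computational_Algebra.Formal_Power_Series"
begin

text \<open>Permutations of {1..n} are represented as lists (position i is 0-indexed).\<close>

definition occ1423 :: "nat list \<Rightarrow> nat set" where
  "occ1423 p = {i. i + 3 < length p \<and>
      p ! i < p ! (i+2) \<and> p ! (i+2) < p ! (i+3) \<and> p ! (i+3) < p ! (i+1)}"

definition is_cluster :: "nat \<Rightarrow> nat \<Rightarrow> nat list \<Rightarrow> bool" where
  "is_cluster n k p \<longleftrightarrow>
     length p = n \<and> distinct p \<and> set p = {1..n} \<and>
     card (occ1423 p) = k \<and>
     (\<forall>j<n. \<exists>i\<in>occ1423 p. i \<le> j \<and> j \<le> i + 3) \<and>
     (\<forall>i\<in>occ1423 p. \<forall>i'\<in>occ1423 p.
        i < i' \<and> (\<forall>l\<in>occ1423 p. \<not> (i < l \<and> l < i')) \<longrightarrow> i' \<le> i + 3)"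

definition s_clust :: "nat \<Rightarrow> nat \<Rightarrow> nat" where
  "s_clust n k = (if n = 1 then (if k = 0 then 1 else 0)
                  else if n < 4 then 0
                  else card {p. is_cluster n k p})"

text \<open>t_n = sum over k of (-1)^k s_{n,k}; s_{n,k} = 0 for k > n.\<close>
definition t_clust :: "nat \<Rightarrow> int" where
  "t_clust n = (\<Sum>k\<le>n. (-1) ^ k * int (s_clust n k))"

definition T_clust :: "rat fps" where
  "T_clust = Abs_fps (\<lambda>n. if n = 0 then 1 else of_int (t_clust n))"

definition Bfun :: "rat fps \<Rightarrow> rat fps" where
  "Bfun f = f / (1 + f ^ 2)"

fun Bj :: "nat \<Rightarrow> rat fps" where
  "Bj 0 = fps_X"
| "Bj (Suc j) = Bfun (Bj j)"

end

theory Submission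
  imports Defs
begin

unbundle fps_syntax

text \<open>
  A cluster of 1423 starts with the entry 1 and has occurrences at position 0 and, if it has
  length at least 5, at exactly one of the positions 2 and 3. Removing the first two entries,
  respectively the first three (which are then 1, v, 2), and standardising the rest leaves a
  smaller cluster with one occurrence less; conversely the removed prefix can be re-attached to
  any smaller cluster for every admissible second entry v. Summing the signs (-1)^(number of
  occurrences) with weight w^(n - v), where w = 1/(1 + x^2), this decomposition gives a linear
  recurrence, and telescoping it yields the functional equation
  T(x) = 1 + x/(1 + x) T(x/(1 + x^2)). Iterating the equation along B_j writes T - 1 as the
  N-th partial sum of the series plus a remainder divisible by x^(N+1), so the partial sums
  converge to T - 1 in the x-adic topology.
\<close>

definition gaps_le :: "nat \<Rightarrow> nat set \<Rightarrow> bool" where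
  "gaps_le g A \<longleftrightarrow>
     (\<forall>i\<in>A. \<forall>i'\<in>A. i < i' \<and> (\<forall>l\<in>A. \<not> (i < l \<and> l < i')) \<longrightarrow> i' \<le> i + g)"

definition occ_covering :: "nat list \<Rightarrow> bool" where
  "occ_covering p \<longleftrightarrow> (\<forall>j<length p. \<exists>i\<in>occ1423 p. i \<le> j \<and> j \<le> i + 3)"

definition clusters :: "nat \<Rightarrow> nat list set" where
  "clusters n = {p. length p = n \<and> distinct p \<and> set p = {1..n} \<and>
                    occ_covering p \<and> gaps_le 3 (occ1423 p)}"

lemma is_cluster_iff: "is_cluster n k p \<longleftrightarrow> p \<in> clusters n \<and> card (occ1423 p) = k"
  by (auto simp: is_cluster_def clusters_def occ_covering_def gaps_le_def)

lemma finite_clusters [simp]: "finite (clusters n)"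
proof -
  have "clusters n \<subseteq> {xs. set xs \<subseteq> {1..n} \<and> length xs = n}"
    by (auto simp: clusters_def)
  then show ?thesis
    using finite_lists_length_eq[of "{1..n}" n] finite_subset by blast
qed

lemma gaps_le_shift: "gaps_le g ((\<lambda>k. k + d) ` A) \<longleftrightarrow> gaps_le g A"
  unfolding gaps_le_def by force

lemma gaps_le_insert_0_shift:
  assumes "0 \<in> A" "0 < d" "d \<le> g"
  shows "gaps_le g (insert 0 ((\<lambda>k. k + d) ` A)) \<longleftrightarrow> gaps_le g A"
proof -
  let ?A = "(\<lambda>k. k + d) ` A"
  have "gaps_le g (insert 0 ?A) \<longleftrightarrow> gaps_le g ?A"
  proof -
    have "d \<in> ?A" using assms(1) by force
    moreover have "0 \<notin> ?A" "\<forall>i\<in>?A. d \<le> i" using assms(2) by auto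
    ultimately show ?thesis
      unfolding gaps_le_def using assms(3) by (auto 4 3 dest: leD)
  qed
  then show ?thesis by (simp add: gaps_le_shift)
qed

lemma occ1423_D:
  "i \<in> occ1423 p \<Longrightarrow>
     i + 3 < length p \<and> p!i < p!(i+2) \<and> p!(i+2) < p!(i+3) \<and> p!(i+3) < p!(i+1)"
  by (simp add: occ1423_def)

lemma occ1423_0_D: "0 \<in> occ1423 p \<Longrightarrow> 3 < length p \<and> p!0 < p!2 \<and> p!2 < p!3 \<and> p!3 < p!1"
  by (simp add: occ1423_def numeral_2_eq_2)

lemma occ1423_0_I:
  "3 < length p \<Longrightarrow> p!0 < p!2 \<Longrightarrow> p!2 < p!3 \<Longrightarrow> p!3 < p!1 \<Longrightarrow> 0 \<in> occ1423 p"
  by (simp add: occ1423_def numeral_2_eq_2)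

lemma occ1423_1_D: "1 \<in> occ1423 p \<Longrightarrow> p!1 < p!3"
  by (simp add: occ1423_def numeral_eq_Suc)

lemma occ1423_2_D: "2 \<in> occ1423 p \<Longrightarrow> p!5 < p!3"
  by (simp add: occ1423_def numeral_eq_Suc)

lemma occ1423_nth_less:
  assumes "i \<in> occ1423 p" "i < j" "j \<le> i + 3"
  shows "p!i < p!j"
proof -
  have "j = i + 1 \<or> j = i + 2 \<or> j = i + 3" using assms(2,3) by arith
  then show ?thesis using occ1423_D[OF assms(1)] by auto
qed

lemma Suc_notin_occ1423: "i \<in> occ1423 p \<Longrightarrow> Suc i \<notin> occ1423 p"
  by (auto simp: occ1423_def)

lemma occ1423_subset: "occ1423 p \<subseteq> {..<length p}"
  by (auto simp: occ1423_def)

lemma finite_occ1423 [simp]: "finite (occ1423 p)"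
  using occ1423_subset finite_subset by blast

lemma occ1423_append_shift: "i + length xs \<in> occ1423 (xs @ ys) \<longleftrightarrow> i \<in> occ1423 ys"
  by (simp add: occ1423_def nth_append add.assoc[symmetric])

lemma occ1423_map_strict_mono: "strict_mono g \<Longrightarrow> occ1423 (map g q) = occ1423 q"
  by (auto simp: occ1423_def strict_mono_less)

lemma occ_covering_map_strict_mono: "strict_mono g \<Longrightarrow> occ_covering (map g q) = occ_covering q"
  by (simp add: occ_covering_def occ1423_map_strict_mono)

lemma occ_covering_append_iff:
  assumes occ: "occ1423 (xs @ ys) = insert 0 ((\<lambda>k. k + length xs) ` occ1423 ys)"
    and "0 \<in> occ1423 ys" "length xs \<le> 3"
  shows "occ_covering (xs @ ys) \<longleftrightarrow> occ_covering ys"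
proof
  assume cov: "occ_covering (xs @ ys)"
  show "occ_covering ys" unfolding occ_covering_def
  proof (intro allI impI)
    fix j assume "j < length ys"
    then obtain i where i: "i \<in> occ1423 (xs @ ys)" "i \<le> j + length xs" "j + length xs \<le> i + 3"
      using cov unfolding occ_covering_def by (metis add.commute length_append nat_add_left_cancel_less)
    show "\<exists>i\<in>occ1423 ys. i \<le> j \<and> j \<le> i + 3"
    proof (cases "i = 0")
      case True
      then show ?thesis using i \<open>0 \<in> occ1423 ys\<close> by auto
    next
      case False
      then obtain k where "k \<in> occ1423 ys" "i = k + length xs" using i(1) occ by auto
      then show ?thesis using i by auto
    qed
  qed
next
  assume cov: "occ_covering ys"
  show "occ_covering (xs @ ys)" unfolding occ_covering_def
  proof (intro allI impI)
    fix j assume j: "j < length (xs @ ys)"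
    show "\<exists>i\<in>occ1423 (xs @ ys). i \<le> j \<and> j \<le> i + 3"
    proof (cases "j < length xs")
      case True
      then show ?thesis using occ assms(3) by auto
    next
      case False
      then obtain i where "i \<in> occ1423 ys" "i \<le> j - length xs" "j - length xs \<le> i + 3"
        using cov j unfolding occ_covering_def by (metis diff_less_mono length_append add_diff_cancel_left' not_less)
      then show ?thesis using occ False by (intro bexI[of _ "i + length xs"]) auto
    qed
  qed
qed

subsection \<open>Shape of a cluster\<close>

lemma occ_predecessor:
  assumes cov: "occ_covering p" and gaps: "gaps_le 3 (occ1423 p)"
    and i: "i \<in> occ1423 p" "i < j" "j < length p"
  obtains i' where "i' \<in> occ1423 p" "i \<le> i'" "i' < j" "j \<le> i' + 3"
proof -
  define L where "L = {l\<in>occ1423 p. l < j}"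
  have "i \<in> L" "finite L" using i by (simp_all add: L_def)
  define i' where "i' = Max L"
  have "i' \<in> L" "i \<le> i'"
    using Max_in[of L] Max_ge[of L i] \<open>i \<in> L\<close> \<open>finite L\<close> unfolding i'_def by blast+
  then have i': "i' \<in> occ1423 p" "i' < j" "i \<le> i'" by (simp_all add: L_def)
  obtain i0 where i0: "i0 \<in> occ1423 p" "i0 \<le> j" "j \<le> i0 + 3"
    using cov i(3) unfolding occ_covering_def by blast
  have "j \<le> i' + 3"
  proof (cases "i0 < j")
    case True
    then have "i0 \<le> i'" using Max_ge[of L i0] \<open>finite L\<close> i0(1) by (simp add: i'_def L_def)
    then show ?thesis using i0 by simp
  next
    case False
    then have "j \<in> occ1423 p" using i0 by simp
    moreover have "\<not> (i' < l \<and> l < j)" if "l \<in> occ1423 p" for l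
    proof
      assume "i' < l \<and> l < j"
      then have "l \<in> L" "i' < l" using that by (simp_all add: L_def)
      then show False using Max_ge[OF \<open>finite L\<close>] unfolding i'_def by (meson leD)
    qed
    ultimately show ?thesis using gaps i'(1,2) unfolding gaps_le_def by blast
  qed
  with i' show ?thesis using that by blast
qed

text \<open>Each entry after an occurrence is linked to it by a chain of occurrences, each of which
  starts with the smallest of its four entries.\<close>

lemma nth_occ_le:
  assumes cov: "occ_covering p" and gaps: "gaps_le 3 (occ1423 p)"
    and i: "i \<in> occ1423 p"
  shows "i \<le> j \<Longrightarrow> j < length p \<Longrightarrow> p!i \<le> p!j"
proof (induction j rule: less_induct)
  case (less j)
  show ?case
  proof (cases "i = j")
    case False
    then have "i < j" using less.prems(1) by simp
    then obtain i' where i': "i' \<in> occ1423 p" "i \<le> i'" "i' < j" "j \<le> i' + 3"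
      using occ_predecessor[OF cov gaps i _ less.prems(2)] by blast
    have "p!i \<le> p!i'" using less.IH[of i'] i' less.prems by simp
    also have "\<dots> < p!j" using occ1423_nth_less i' by blast
    finally show ?thesis by simp
  qed simp
qed

lemma cluster_occ_0: "p \<in> clusters n \<Longrightarrow> 0 < n \<Longrightarrow> 0 \<in> occ1423 p"
  unfolding clusters_def occ_covering_def by force

lemma cluster_length_ge_4: "p \<in> clusters n \<Longrightarrow> 0 < n \<Longrightarrow> 4 \<le> n"
  using occ1423_0_D[OF cluster_occ_0] by (fastforce simp: clusters_def)

lemma clusters_empty: "0 < n \<Longrightarrow> n < 4 \<Longrightarrow> clusters n = {}"
  using cluster_length_ge_4 by fastforce

lemma occ1423_1423: "occ1423 [1,4,2,3] = {0}"
  by (auto simp: occ1423_def)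

lemma cluster_nth_mem: "p \<in> clusters n \<Longrightarrow> j < n \<Longrightarrow> p!j \<in> {1..n}"
  by (auto simp: clusters_def)

lemma clusters_4: "clusters 4 = {[1,4,2,3]}"
proof
  show "clusters 4 \<subseteq> {[1,4,2,3]}"
  proof
    fix p assume p: "p \<in> clusters 4"
    have "p!0 \<in> {1..4}" "p!1 \<in> {1..4}" "p!2 \<in> {1..4}" "p!3 \<in> {1..4}"
      using cluster_nth_mem[OF p] by simp_all
    moreover have "p!0 < p!2" "p!2 < p!3" "p!3 < p!1"
      using occ1423_0_D[OF cluster_occ_0[OF p]] by simp_all
    ultimately have v: "p!0 = 1" "p!1 = 4" "p!2 = 2" "p!3 = 3" by simp_all
    have "length p = 4" using p by (simp add: clusters_def)
    then have "p = [p!0, p!1, p!2, p!3]"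
      by (cases p; cases "tl p"; cases "tl (tl p)"; cases "tl (tl (tl p))") auto
    then have "p = [1,4,2,3]" using v by metis
    then show "p \<in> {[1,4,2,3]}" by simp
  qed
  have "set [1,4,2,3] = {1..4::nat}" by auto
  then show "{[1,4,2,3]} \<subseteq> clusters 4"
    by (simp add: clusters_def occ_covering_def gaps_le_def occ1423_1423[simplified])
qed

lemma cluster_nth_0:
  assumes p: "p \<in> clusters n" and "0 < n"
  shows "p!0 = 1"
proof -
  have lp: "length p = n" and sp: "set p = {1..n}" using p by (simp_all add: clusters_def)
  have "1 \<in> set p" using sp \<open>0 < n\<close> by simp
  then obtain j where "j < n" "p!j = 1" using lp by (auto simp: in_set_conv_nth)
  moreover have "p!0 \<le> p!j"
    using nth_occ_le[of p 0 j] cluster_occ_0[OF p \<open>0 < n\<close>] p \<open>j < n\<close> lp by (simp add: clusters_def)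
  moreover have "p!0 \<in> {1..n}" using cluster_nth_mem[OF p \<open>0 < n\<close>] .
  ultimately show ?thesis by simp
qed

lemma cluster_second_occ:
  assumes p: "p \<in> clusters n" and n: "5 \<le> n"
  shows "2 \<in> occ1423 p \<longleftrightarrow> 3 \<notin> occ1423 p"
proof -
  have cov: "occ_covering p" and gaps: "gaps_le 3 (occ1423 p)" and lp: "length p = n"
    using p by (simp_all add: clusters_def)
  have "0 \<in> occ1423 p" using cluster_occ_0 p n by simp
  obtain i where i: "i \<in> occ1423 p" "0 \<le> i" "i < 4" "4 \<le> i + 3"
    using occ_predecessor[OF cov gaps \<open>0 \<in> occ1423 p\<close>, of 4] lp n by auto
  have "i \<noteq> 1" using i(1) Suc_notin_occ1423[OF \<open>0 \<in> occ1423 p\<close>] by auto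
  with i(3,4) have "i = 2 \<or> i = 3" by arith
  then have "2 \<in> occ1423 p \<or> 3 \<in> occ1423 p" using i(1) by blast
  moreover have "3 \<notin> occ1423 p" if "2 \<in> occ1423 p"
    using Suc_notin_occ1423[OF that] by (simp add: numeral_3_eq_3 numeral_2_eq_2)
  ultimately show ?thesis by blast
qed

subsection \<open>Attaching a prefix to a cluster\<close>

definition skip :: "nat \<Rightarrow> nat \<Rightarrow> nat \<Rightarrow> nat" where
  "skip d v u = (if u + d < v then u + d else Suc (u + d))"

definition unskip :: "nat \<Rightarrow> nat \<Rightarrow> nat \<Rightarrow> nat" where
  "unskip d v u = (if u < v then u - d else u - Suc d)"

definition attach :: "nat \<Rightarrow> nat \<Rightarrow> nat list \<Rightarrow> nat list" where
  "attach d v q = (1 # v # [2..<Suc d]) @ map (skip d v) q"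

lemma strict_mono_skip: "strict_mono (skip d v)"
  by (simp add: strict_mono_Suc_iff skip_def)

lemma skip_image:
  assumes "d < v" "v \<le> m + Suc d"
  shows "skip d v ` {1..m} = {Suc d..m + Suc d} - {v}"
proof
  show "skip d v ` {1..m} \<subseteq> {Suc d..m + Suc d} - {v}"
    using assms by (auto simp: skip_def)
  show "{Suc d..m + Suc d} - {v} \<subseteq> skip d v ` {1..m}"
  proof
    fix u assume u: "u \<in> {Suc d..m + Suc d} - {v}"
    show "u \<in> skip d v ` {1..m}"
    proof (cases "u < v")
      case True
      then show ?thesis using u assms by (intro image_eqI[of _ _ "u - d"]) (auto simp: skip_def)
    next
      case False
      then show ?thesis using u assms by (intro image_eqI[of _ _ "u - Suc d"]) (auto simp: skip_def)
    qed
  qed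
qed

lemma skip_unskip: "d < u \<Longrightarrow> u \<noteq> v \<Longrightarrow> skip d v (unskip d v u) = u"
  by (auto simp: skip_def unskip_def)

lemma length_attach: "0 < d \<Longrightarrow> length (attach d v q) = Suc d + length q"
  unfolding attach_def by (simp del: upt_Suc)

lemma attach_nth_skip: "0 < d \<Longrightarrow> i < length q \<Longrightarrow> attach d v q ! (Suc d + i) = skip d v (q!i)"
  by (cases d) (simp_all add: attach_def nth_append del: upt_Suc)

lemma attach_nth_1 [simp]: "attach d v q ! Suc 0 = v"
  by (simp add: attach_def)

lemma attach_inj: "attach d v q = attach d v' q' \<Longrightarrow> v = v' \<and> q = q'"
  using strict_mono_imp_inj_on[OF strict_mono_skip]
  by (auto simp: attach_def inj_map_eq_map)

lemma set_attach_prefix: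
  assumes "0 < d"
  shows "set (1 # v # [2..<Suc d]) = {1..d} \<union> {v}"
proof -
  have "set (1 # v # [2..<Suc d]) = insert v (insert 1 {2..d})"
    by (simp add: atLeastLessThanSuc_atLeastAtMost insert_commute del: upt_Suc)
  also have "insert 1 {2..d} = {1..d}"
    using assms by (metis One_nat_def Suc_1 Suc_leI atLeastAtMost_insertL)
  finally show ?thesis by simp
qed

lemma attach_perm:
  assumes "distinct q" "set q = {1..m}" "0 < d" "d < v" "v \<le> m + Suc d"
  shows "distinct (attach d v q)" "set (attach d v q) = {1..m + Suc d}"
proof -
  let ?pre = "1 # v # [2..<Suc d]"
  have pre: "set ?pre = {1..d} \<union> {v}" using set_attach_prefix[OF assms(3)] .
  have sk: "set (map (skip d v) q) = {Suc d..m + Suc d} - {v}"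
    using skip_image[OF assms(4,5)] assms(2) by simp
  have "distinct ?pre" using assms(3,4) by (auto simp del: upt_Suc)
  moreover have "distinct (map (skip d v) q)"
    using assms(1) strict_mono_imp_inj_on[OF strict_mono_skip] by (simp add: distinct_map inj_on_subset)
  moreover have "set ?pre \<inter> set (map (skip d v) q) = {}"
    unfolding pre sk by fastforce
  ultimately show "distinct (attach d v q)"
    unfolding attach_def distinct_append by (intro conjI)
  have "set (attach d v q) = ({1..d} \<union> {v}) \<union> ({Suc d..m + Suc d} - {v})"
    unfolding attach_def set_append pre sk ..
  also have "\<dots> = {1..m + Suc d}" using assms(4,5) by auto
  finally show "set (attach d v q) = {1..m + Suc d}" .
qed

lemma attach_unskip_drop:
  assumes p: "distinct p" "set p = {1..n}" "take (Suc d) p = 1 # v # [2..<Suc d]"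
    and "0 < d" "Suc d \<le> n"
  defines "q \<equiv> map (unskip d v) (drop (Suc d) p)"
  shows "attach d v q = p" "distinct q" "set q = {1..n - Suc d}" "d < v" "v \<le> n"
proof -
  let ?pre = "1 # v # [2..<Suc d]" and ?r = "drop (Suc d) p"
  have pre: "set ?pre = {1..d} \<union> {v}" using set_attach_prefix[OF \<open>0 < d\<close>] .
  have pe: "p = ?pre @ ?r" using p(3) by (metis append_take_drop_id)
  then have dis: "distinct ?pre" "distinct ?r" "set ?pre \<inter> set ?r = {}"
    using p(1) distinct_append by metis+
  have "v \<in> set (take (Suc d) p)" using p(3) by simp
  then have "v \<in> set p" by (rule in_set_takeD)
  then have "v \<in> {1..n}" using p(2) by simp
  moreover have "v \<noteq> 1" "v \<notin> {2..d}" using dis(1) by (auto simp del: upt_Suc)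
  ultimately show "d < v" "v \<le> n" by auto
  have "set p = set ?pre \<union> set ?r" using arg_cong[OF pe, of set] by (simp del: upt_Suc)
  then have "set ?r = {1..n} - ({1..d} \<union> {v})" using p(2) dis(3) unfolding pre by blast
  also have "\<dots> = {Suc d..n} - {v}" by auto
  finally have sr: "set ?r = {Suc d..n} - {v}" .
  have mr: "map (skip d v) q = ?r"
    unfolding q_def map_map
  proof (rule map_idI)
    fix u assume "u \<in> set ?r"
    then show "(skip d v \<circ> unskip d v) u = u" using sr by (simp add: skip_unskip)
  qed
  then show "attach d v q = p" using pe by (simp add: attach_def)
  show "distinct q" using mr dis(2) by (metis distinct_map)
  have "skip d v ` set q = set ?r" using mr by (metis list.set_map)
  also have "\<dots> = skip d v ` {1..n - Suc d}"
    using sr skip_image[OF \<open>d < v\<close>, of "n - Suc d"] \<open>v \<le> n\<close> \<open>Suc d \<le> n\<close> by simp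
  finally show "set q = {1..n - Suc d}"
    using strict_mono_imp_inj_on[OF strict_mono_skip] by (simp add: inj_image_eq_iff)
qed

lemma occ1423_attach_shift:
  assumes "0 < d"
  shows "k + Suc d \<in> occ1423 (attach d v q) \<longleftrightarrow> k \<in> occ1423 q"
proof -
  have "length (1 # v # [2..<Suc d]) = Suc d" using assms by (simp del: upt_Suc)
  then show ?thesis
    using occ1423_append_shift[of k "1 # v # [2..<Suc d]" "map (skip d v) q"]
    by (simp add: attach_def occ1423_map_strict_mono strict_mono_skip del: upt_Suc)
qed

lemma occ1423_attach:
  assumes "0 < d" "0 \<in> occ1423 (attach d v q)" "\<forall>l\<in>{1..d}. l \<notin> occ1423 (attach d v q)"
  shows "occ1423 (attach d v q) = insert 0 ((\<lambda>k. k + Suc d) ` occ1423 q)"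
proof (rule set_eqI)
  fix l
  have "l = 0 \<or> l \<in> {1..d} \<or> Suc d \<le> l" by auto
  then show "l \<in> occ1423 (attach d v q) \<longleftrightarrow> l \<in> insert 0 ((\<lambda>k. k + Suc d) ` occ1423 q)"
  proof (elim disjE)
    assume "Suc d \<le> l"
    then have "l = (l - Suc d) + Suc d" by simp
    then show ?thesis using occ1423_attach_shift[OF assms(1), of "l - Suc d" v q] by force
  qed (use assms(2,3) in auto)
qed

lemma attach_in_clusters_iff:
  assumes q: "distinct q" "set q = {1..m}" and d: "0 < d" "d \<le> 2" and v: "d < v" "v \<le> m + Suc d"
    and "0 \<in> occ1423 q"
    and occ: "occ1423 (attach d v q) = insert 0 ((\<lambda>k. k + Suc d) ` occ1423 q)"
  shows "attach d v q \<in> clusters (m + Suc d) \<longleftrightarrow> q \<in> clusters m"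
proof -
  let ?pre = "1 # v # [2..<Suc d]" and ?q = "map (skip d v) q"
  have "length ?pre = Suc d" using d(1) by (simp del: upt_Suc)
  then have "occ1423 (?pre @ ?q) = insert 0 ((\<lambda>k. k + length ?pre) ` occ1423 ?q)"
    using occ by (simp add: attach_def occ1423_map_strict_mono strict_mono_skip del: upt_Suc)
  from occ_covering_append_iff[OF this] have cov: "occ_covering (attach d v q) \<longleftrightarrow> occ_covering q"
    using \<open>0 \<in> occ1423 q\<close> \<open>length ?pre = Suc d\<close> d(2)
    by (simp add: attach_def occ1423_map_strict_mono occ_covering_map_strict_mono strict_mono_skip
        del: upt_Suc)
  have gaps: "gaps_le 3 (occ1423 (attach d v q)) \<longleftrightarrow> gaps_le 3 (occ1423 q)"
    unfolding occ using \<open>0 \<in> occ1423 q\<close> d by (intro gaps_le_insert_0_shift) auto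
  have "length q = m" using q distinct_card[of q] by simp
  then show ?thesis
    using attach_perm[OF q d(1) v] q cov gaps length_attach[OF d(1)]
    by (auto simp: clusters_def)
qed

lemma attach_1: "attach 1 v q = 1 # v # map (skip 1 v) q"
  by (simp add: attach_def)

lemma attach_2: "attach 2 v q = 1 # v # 2 # map (skip 2 v) q"
  by (simp add: attach_def)

lemma attach_1_cluster:
  assumes q: "q \<in> clusters m" "0 < m" and v: "q!1 + 2 \<le> v" "v \<le> m + 2"
  shows "attach 1 v q \<in> clusters (m + 2)" "2 \<in> occ1423 (attach 1 v q)"
    "card (occ1423 (attach 1 v q)) = Suc (card (occ1423 q))"
proof -
  let ?p = "attach 1 v q"
  have lq: "length q = m" "distinct q" "set q = {1..m}" using q(1) by (simp_all add: clusters_def)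
  have "4 \<le> m" using cluster_length_ge_4 q by blast
  have "0 \<in> occ1423 q" using cluster_occ_0 q by blast
  have "q!0 = 1" "q!0 < q!1" using cluster_nth_0[OF q] occ1423_0_D[OF \<open>0 \<in> occ1423 q\<close>] by simp_all
  then have "skip 1 v (q!0) = 2" "skip 1 v (q!1) = q!1 + 1" using v(1) by (simp_all add: skip_def)
  then have p: "?p!0 = 1" "?p!1 = v" "?p!2 = 2" "?p!3 = q!1 + 1" "3 < length ?p"
    using lq(1) \<open>4 \<le> m\<close> unfolding attach_1 by (simp_all add: numeral_eq_Suc)
  then have "0 \<in> occ1423 ?p" using \<open>q!0 = 1\<close> \<open>q!0 < q!1\<close> v(1) by (intro occ1423_0_I) simp_all
  moreover have "1 \<notin> occ1423 ?p" using occ1423_1_D[of ?p] p v(1) by auto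
  ultimately have occ: "occ1423 ?p = insert 0 ((\<lambda>k. k + 2) ` occ1423 q)"
    using occ1423_attach[of 1 v q] by simp
  show "?p \<in> clusters (m + 2)"
    using attach_in_clusters_iff[OF lq(2,3), of 1 v] occ q(1) \<open>0 \<in> occ1423 q\<close> v by simp
  show "2 \<in> occ1423 ?p" using occ \<open>0 \<in> occ1423 q\<close> by force
  show "card (occ1423 ?p) = Suc (card (occ1423 q))"
    unfolding occ by (subst card_insert_disjoint) (auto simp: card_image inj_on_def)
qed

lemma attach_2_cluster:
  assumes q: "q \<in> clusters m" "0 < m" and v: "4 \<le> v" "v \<le> m + 3"
  shows "attach 2 v q \<in> clusters (m + 3)" "3 \<in> occ1423 (attach 2 v q)"
    "card (occ1423 (attach 2 v q)) = Suc (card (occ1423 q))"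
proof -
  let ?p = "attach 2 v q"
  have lq: "length q = m" "distinct q" "set q = {1..m}" using q(1) by (simp_all add: clusters_def)
  have "4 \<le> m" using cluster_length_ge_4 q by blast
  have "0 \<in> occ1423 q" using cluster_occ_0 q by blast
  have "q!0 = 1" "1 \<le> q!2" using cluster_nth_0[OF q] cluster_nth_mem[OF q(1), of 2] \<open>4 \<le> m\<close> by simp_all
  then have "skip 2 v (q!0) = 3" "3 \<le> skip 2 v (q!2)" using v(1) by (simp_all add: skip_def)
  then have p: "?p!0 = 1" "?p!1 = v" "?p!2 = 2" "?p!3 = 3" "3 \<le> ?p!5" "3 < length ?p"
    using lq(1) \<open>4 \<le> m\<close> unfolding attach_2 by (simp_all add: numeral_eq_Suc)
  then have "0 \<in> occ1423 ?p" using v(1) by (intro occ1423_0_I) simp_all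
  moreover have "1 \<notin> occ1423 ?p" using occ1423_1_D[of ?p] p v(1) by auto
  moreover have "2 \<notin> occ1423 ?p" using occ1423_2_D[of ?p] p by auto
  moreover have "{1..2::nat} = {1, 2}" by auto
  ultimately have occ: "occ1423 ?p = insert 0 ((\<lambda>k. k + 3) ` occ1423 q)"
    using occ1423_attach[of 2 v q] by (simp add: numeral_3_eq_3)
  show "?p \<in> clusters (m + 3)"
    using attach_in_clusters_iff[OF lq(2,3), of 2 v] occ q(1) \<open>0 \<in> occ1423 q\<close> v by simp
  show "3 \<in> occ1423 ?p" using occ \<open>0 \<in> occ1423 q\<close> by force
  show "card (occ1423 ?p) = Suc (card (occ1423 q))"
    unfolding occ by (subst card_insert_disjoint) (auto simp: card_image inj_on_def)
qed

lemma cluster_detach_1: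
  assumes p: "p \<in> clusters n" and "2 \<in> occ1423 p"
  obtains q where "p = attach 1 (p!1) q" "q \<in> clusters (n - 2)" "q!1 + 2 \<le> p!1" "p!1 \<le> n"
proof -
  let ?v = "p!1"
  have lp: "length p = n" "distinct p" "set p = {1..n}" using p by (simp_all add: clusters_def)
  have "5 < n" using occ1423_D[OF \<open>2 \<in> occ1423 p\<close>] lp(1) by simp
  have "0 \<in> occ1423 p" using cluster_occ_0 p \<open>5 < n\<close> by simp
  have "take (Suc 1) p = [p!0, ?v]" using lp(1) \<open>5 < n\<close> by (cases p; cases "tl p") auto
  then have pre: "take (Suc 1) p = 1 # ?v # [2..<Suc 1]" using cluster_nth_0[OF p] \<open>5 < n\<close> by simp
  define q where "q = map (unskip 1 ?v) (drop (Suc 1) p)"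
  have q: "attach 1 ?v q = p" "distinct q" "set q = {1..n - 2}" "1 < ?v" "?v \<le> n"
    using attach_unskip_drop[OF lp(2,3) pre] \<open>5 < n\<close> unfolding q_def by (simp_all add: numeral_2_eq_2)
  have "1 \<notin> occ1423 p" using Suc_notin_occ1423[OF \<open>0 \<in> occ1423 p\<close>] by simp
  then have occ: "occ1423 (attach 1 ?v q) = insert 0 ((\<lambda>k. k + 2) ` occ1423 q)"
    using occ1423_attach[of 1 ?v q] \<open>0 \<in> occ1423 p\<close> q(1) by simp
  have "0 \<in> occ1423 q"
    using occ1423_attach_shift[of 1 0 ?v q] \<open>2 \<in> occ1423 p\<close> q(1) by (simp add: numeral_2_eq_2)
  have "length q = n - 2" using q(2,3) distinct_card[of q] by simp
  have cl: "q \<in> clusters (n - 2)"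
    using attach_in_clusters_iff[OF q(2,3), of 1 ?v] occ q \<open>0 \<in> occ1423 q\<close> p \<open>5 < n\<close>
    by (simp add: Suc_diff_Suc numeral_2_eq_2)
  have "attach 1 ?v q ! (Suc 1 + 1) = skip 1 ?v (q!1)"
    using attach_nth_skip[of 1 1 q ?v] \<open>length q = n - 2\<close> \<open>5 < n\<close> by simp
  then have "p!3 = skip 1 ?v (q!1)" using q(1) by (simp add: numeral_3_eq_3)
  then have "q!1 + 2 \<le> ?v"
    using occ1423_0_D[OF \<open>0 \<in> occ1423 p\<close>] by (simp add: skip_def split: if_splits)
  then show ?thesis using that[OF q(1)[symmetric] cl] q(5) by simp
qed

lemma cluster_nth_2:
  assumes p: "p \<in> clusters n" and "3 \<in> occ1423 p"
  shows "p!2 = 2"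
proof -
  have lp: "length p = n" "set p = {1..n}" using p by (simp_all add: clusters_def)
  have "6 < n" using occ1423_D[OF \<open>3 \<in> occ1423 p\<close>] lp(1) by simp
  have "0 \<in> occ1423 p" using cluster_occ_0 p \<open>6 < n\<close> by simp
  have ord: "1 < p!2" "p!2 < p!3" "p!3 < p!1"
    using occ1423_0_D[OF \<open>0 \<in> occ1423 p\<close>] cluster_nth_0[OF p] \<open>6 < n\<close> by simp_all
  have "2 \<in> set p" using lp(2) \<open>6 < n\<close> by simp
  then obtain j where j: "j < n" "p!j = 2" using lp(1) by (auto simp: in_set_conv_nth)
  have "p!0 = 1" using cluster_nth_0[OF p] \<open>6 < n\<close> by simp
  have "j \<noteq> 0"
  proof
    assume "j = 0"
    with j(2) \<open>p!0 = 1\<close> show False by simp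
  qed
  moreover have "j \<noteq> 1"
  proof
    assume "j = 1"
    with j(2) ord show False by simp
  qed
  moreover have "\<not> 3 \<le> j"
  proof
    assume "3 \<le> j"
    then have "p!3 \<le> p!j"
      using nth_occ_le[of p 3 j] p \<open>3 \<in> occ1423 p\<close> j(1) lp(1) by (simp add: clusters_def)
    then show False using j(2) ord by simp
  qed
  ultimately have "j = 2" by arith
  then show ?thesis using j(2) by simp
qed

lemma cluster_detach_2:
  assumes p: "p \<in> clusters n" and "3 \<in> occ1423 p"
  obtains q where "p = attach 2 (p!1) q" "q \<in> clusters (n - 3)" "4 \<le> p!1" "p!1 \<le> n"
proof -
  let ?v = "p!1"
  have lp: "length p = n" "distinct p" "set p = {1..n}" using p by (simp_all add: clusters_def)
  have "6 < n" using occ1423_D[OF \<open>3 \<in> occ1423 p\<close>] lp(1) by simp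
  have "0 \<in> occ1423 p" using cluster_occ_0 p \<open>6 < n\<close> by simp
  have "take (Suc 2) p = [p!0, ?v, p!2]"
    using lp(1) \<open>6 < n\<close> by (cases p; cases "tl p"; cases "tl (tl p)") auto
  then have pre: "take (Suc 2) p = 1 # ?v # [2..<Suc 2]"
    using cluster_nth_0[OF p] cluster_nth_2[OF p \<open>3 \<in> occ1423 p\<close>] \<open>6 < n\<close> by simp
  define q where "q = map (unskip 2 ?v) (drop (Suc 2) p)"
  have q: "attach 2 ?v q = p" "distinct q" "set q = {1..n - 3}" "?v \<le> n"
    using attach_unskip_drop[OF lp(2,3) pre] \<open>6 < n\<close> unfolding q_def by (simp_all add: numeral_3_eq_3)
  have "1 \<notin> occ1423 p" using Suc_notin_occ1423[OF \<open>0 \<in> occ1423 p\<close>] by simp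
  moreover have "2 \<notin> occ1423 p"
    using Suc_notin_occ1423[of 2 p] \<open>3 \<in> occ1423 p\<close> by (auto simp: numeral_3_eq_3)
  moreover have "{1..2::nat} = {1, 2}" by auto
  ultimately have occ: "occ1423 (attach 2 ?v q) = insert 0 ((\<lambda>k. k + 3) ` occ1423 q)"
    using occ1423_attach[of 2 ?v q] \<open>0 \<in> occ1423 p\<close> q(1) by (simp add: numeral_3_eq_3)
  have "0 \<in> occ1423 q"
    using occ1423_attach_shift[of 2 0 ?v q] \<open>3 \<in> occ1423 p\<close> q(1) by (simp add: numeral_3_eq_3)
  have "4 \<le> ?v"
    using occ1423_0_D[OF \<open>0 \<in> occ1423 p\<close>] cluster_nth_2[OF p \<open>3 \<in> occ1423 p\<close>] by simp
  moreover have cl: "q \<in> clusters (n - 3)"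
    using attach_in_clusters_iff[OF q(2,3), of 2 ?v] occ q \<open>0 \<in> occ1423 q\<close> p \<open>6 < n\<close> \<open>4 \<le> ?v\<close>
    by (simp add: Suc_diff_Suc numeral_3_eq_3)
  ultimately show ?thesis using that[OF q(1)[symmetric] cl] q(4) by simp
qed

lemma clusters_occ_2_eq:
  assumes "2 < n"
  shows "{p \<in> clusters n. 2 \<in> occ1423 p} =
    (\<lambda>(q, v). attach 1 v q) ` (SIGMA q:clusters (n - 2). {q!1 + 2..n})" (is "?L = ?R")
proof
  show "?L \<subseteq> ?R"
  proof clarify
    fix p assume "p \<in> clusters n" "2 \<in> occ1423 p"
    then obtain q where "p = attach 1 (p!1) q" "q \<in> clusters (n - 2)" "q!1 + 2 \<le> p!1" "p!1 \<le> n"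
      by (rule cluster_detach_1)
    then show "p \<in> ?R"
      by (intro image_eqI[of _ _ "(q, p!1)"]) auto
  qed
  show "?R \<subseteq> ?L"
  proof clarify
    fix q v assume "q \<in> clusters (n - 2)" "v \<in> {q!1 + 2..n}"
    then show "attach 1 v q \<in> clusters n \<and> 2 \<in> occ1423 (attach 1 v q)"
      using attach_1_cluster[of q "n - 2" v] assms by (simp add: Suc_diff_Suc numeral_2_eq_2)
  qed
qed

lemma clusters_occ_3_eq:
  assumes "3 < n"
  shows "{p \<in> clusters n. 3 \<in> occ1423 p} = (\<lambda>(q, v). attach 2 v q) ` (clusters (n - 3) \<times> {4..n})"
    (is "?L = ?R")
proof
  show "?L \<subseteq> ?R"
  proof clarify
    fix p assume "p \<in> clusters n" "3 \<in> occ1423 p"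
    then obtain q where "p = attach 2 (p!1) q" "q \<in> clusters (n - 3)" "4 \<le> p!1" "p!1 \<le> n"
      by (rule cluster_detach_2)
    then show "p \<in> ?R"
      by (intro image_eqI[of _ _ "(q, p!1)"]) auto
  qed
  show "?R \<subseteq> ?L"
  proof clarify
    fix q v assume "q \<in> clusters (n - 3)" "v \<in> {4..n}"
    then show "attach 2 v q \<in> clusters n \<and> 3 \<in> occ1423 (attach 2 v q)"
      using attach_2_cluster[of q "n - 3" v] assms by (simp add: Suc_diff_Suc numeral_3_eq_3)
  qed
qed

definition cluster_sign :: "nat list \<Rightarrow> int" where
  "cluster_sign p = (-1) ^ card (occ1423 p)"

definition signed_clusters :: "nat \<Rightarrow> int" where
  "signed_clusters n = (\<Sum>p\<in>clusters n. cluster_sign p)"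

lemma t_clust_eq_signed_clusters:
  assumes "4 \<le> n"
  shows "t_clust n = signed_clusters n"
proof -
  have "t_clust n = (\<Sum>k\<le>n. \<Sum>p\<in>{p\<in>clusters n. card (occ1423 p) = k}. cluster_sign p)"
    using assms unfolding t_clust_def s_clust_def is_cluster_iff
    by (intro sum.cong refl) (auto simp: cluster_sign_def)
  also have "\<dots> = signed_clusters n" unfolding signed_clusters_def
  proof (rule sum.group)
    show "(\<lambda>p. card (occ1423 p)) ` clusters n \<subseteq> {..n}"
      using card_mono[OF finite_lessThan occ1423_subset] by (auto simp: clusters_def)
  qed auto
  finally show ?thesis .
qed

lemma sum_clusters_occ_2:
  fixes F :: "nat \<Rightarrow> 'a::comm_ring_1"
  assumes "2 < n"
  shows "(\<Sum>p | p \<in> clusters n \<and> 2 \<in> occ1423 p. of_int (cluster_sign p) * F (p!1)) =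
    - (\<Sum>q\<in>clusters (n - 2). of_int (cluster_sign q) * (\<Sum>v = q!1 + 2..n. F v))"
proof -
  let ?X = "SIGMA q:clusters (n - 2). {q!1 + 2..n}"
  have inj: "inj_on (\<lambda>(q, v). attach 1 v q) ?X"
    by (rule inj_onI) (auto dest: attach_inj)
  have "(\<Sum>p | p \<in> clusters n \<and> 2 \<in> occ1423 p. of_int (cluster_sign p) * F (p!1)) =
      (\<Sum>(q, v)\<in>?X. of_int (cluster_sign (attach 1 v q)) * F v)"
    unfolding clusters_occ_2_eq[OF assms] sum.reindex[OF inj] by (simp add: o_def case_prod_unfold)
  also have "\<dots> = (\<Sum>(q, v)\<in>?X. - of_int (cluster_sign q) * F v)"
  proof (rule sum.cong, simp, clarify)
    fix q v assume "q \<in> clusters (n - 2)" "v \<in> {q!1 + 2..n}"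
    then show "of_int (cluster_sign (attach 1 v q)) * F v = - of_int (cluster_sign q) * F v"
      using attach_1_cluster(3)[of q "n - 2" v] assms
      by (simp add: cluster_sign_def Suc_diff_Suc numeral_2_eq_2)
  qed
  also have "\<dots> = - (\<Sum>q\<in>clusters (n - 2). of_int (cluster_sign q) * (\<Sum>v = q!1 + 2..n. F v))"
    by (simp add: sum.Sigma[symmetric] sum_distrib_left sum_negf)
  finally show ?thesis .
qed

lemma sum_clusters_occ_3:
  fixes F :: "nat \<Rightarrow> 'a::comm_ring_1"
  assumes "3 < n"
  shows "(\<Sum>p | p \<in> clusters n \<and> 3 \<in> occ1423 p. of_int (cluster_sign p) * F (p!1)) =
    - of_int (signed_clusters (n - 3)) * (\<Sum>v = 4..n. F v)"
proof -
  let ?X = "clusters (n - 3) \<times> {4..n}"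
  have inj: "inj_on (\<lambda>(q, v). attach 2 v q) ?X"
    by (rule inj_onI) (auto dest: attach_inj)
  have "(\<Sum>p | p \<in> clusters n \<and> 3 \<in> occ1423 p. of_int (cluster_sign p) * F (p!1)) =
      (\<Sum>(q, v)\<in>?X. of_int (cluster_sign (attach 2 v q)) * F v)"
    unfolding clusters_occ_3_eq[OF assms] sum.reindex[OF inj] by (simp add: o_def case_prod_unfold)
  also have "\<dots> = (\<Sum>(q, v)\<in>?X. - of_int (cluster_sign q) * F v)"
  proof (rule sum.cong, simp, clarify)
    fix q v assume "q \<in> clusters (n - 3)" "v \<in> {4..n}"
    then show "of_int (cluster_sign (attach 2 v q)) * F v = - of_int (cluster_sign q) * F v"
      using attach_2_cluster(3)[of q "n - 3" v] assms
      by (simp add: cluster_sign_def Suc_diff_Suc numeral_3_eq_3)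
  qed
  also have "\<dots> = - of_int (signed_clusters (n - 3)) * (\<Sum>v = 4..n. F v)"
    by (simp add: sum.cartesian_product[symmetric] signed_clusters_def sum_distrib_right
        sum_distrib_left sum_negf of_int_sum sum.swap[of _ "{4..n}"])
  finally show ?thesis .
qed

lemma sum_clusters_by_second_entry:
  fixes F :: "nat \<Rightarrow> 'a::comm_ring_1"
  assumes "5 \<le> n"
  shows "(\<Sum>p\<in>clusters n. of_int (cluster_sign p) * F (p!1)) =
    - (\<Sum>q\<in>clusters (n - 2). of_int (cluster_sign q) * (\<Sum>v = q!1 + 2..n. F v))
    - of_int (signed_clusters (n - 3)) * (\<Sum>v = 4..n. F v)"
proof -
  let ?f = "\<lambda>p. of_int (cluster_sign p) * F (p!1) :: 'a"
  have "clusters n = {p \<in> clusters n. 2 \<in> occ1423 p} \<union> {p \<in> clusters n. 3 \<in> occ1423 p}"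
    "{p \<in> clusters n. 2 \<in> occ1423 p} \<inter> {p \<in> clusters n. 3 \<in> occ1423 p} = {}"
    using cluster_second_occ[OF _ assms] by blast+
  then have "sum ?f (clusters n) =
      (\<Sum>p | p \<in> clusters n \<and> 2 \<in> occ1423 p. ?f p) + (\<Sum>p | p \<in> clusters n \<and> 3 \<in> occ1423 p. ?f p)"
    by (metis (no_types, lifting) finite_Un finite_clusters sum.union_disjoint)
  then show ?thesis
    using sum_clusters_occ_2[of n F] sum_clusters_occ_3[of n F] assms by simp
qed

subsection \<open>The recurrence for weighted cluster sums\<close>

definition weight :: "rat fps" where
  "weight = inverse (1 + fps_X ^ 2)"

definition weighted_clusters :: "nat \<Rightarrow> rat fps" where
  "weighted_clusters n = (\<Sum>p\<in>clusters n. of_int (cluster_sign p) * weight ^ (n - p!1))"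

text \<open>The empty list is a cluster of length 0, so \<open>signed_clusters 0 = 1\<close> has to be excluded here.\<close>

definition cluster_gf :: "rat fps" where
  "cluster_gf = Abs_fps (\<lambda>m. if m = 0 then 0 else of_int (signed_clusters m))"

lemma weight_mult: "weight * (1 + fps_X ^ 2) = 1"
  unfolding weight_def by (rule inverse_mult_eq_1) simp

lemma one_minus_weight: "1 - weight = fps_X ^ 2 * weight"
  using weight_mult by (simp add: algebra_simps)

lemma one_minus_mult_sum_power_diff:
  fixes x :: "'a::comm_ring_1"
  assumes "a \<le> n + 1"
  shows "(1 - x) * (\<Sum>v = a..n. x ^ (n - v)) = 1 - x ^ (n + 1 - a)"
proof -
  have "(\<Sum>v = a..n. x ^ (n - v)) = (\<Sum>i<n + 1 - a. x ^ i)"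
    by (rule sum.reindex_bij_witness[of _ "\<lambda>i. n - i" "\<lambda>v. n - v"]) (use assms in auto)
  then show ?thesis by (simp add: one_diff_power_eq)
qed

lemma weighted_clusters_rec:
  assumes "2 \<le> k"
  shows "(1 - weight) * weighted_clusters (Suc (Suc (Suc k))) =
    weight * weighted_clusters (Suc k) - of_int (signed_clusters (Suc k))
    - of_int (signed_clusters k) * (1 - weight ^ k)"
proof -
  define n where "n = Suc (Suc (Suc k))"
  have n: "5 \<le> n" "n - 2 = Suc k" "n - 3 = k" using assms by (simp_all add: n_def)
  have geo: "(1 - weight) * (\<Sum>v = q!1 + 2..n. weight ^ (n - v)) = 1 - weight * weight ^ (Suc k - q!1)"
    if "q \<in> clusters (Suc k)" for q
  proof -
    have "q!1 \<in> {1..Suc k}" using cluster_nth_mem[OF that, of 1] assms by simp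
    then have "n + 1 - (q!1 + 2) = Suc (Suc k - q!1)" by (auto simp: n_def)
    then show ?thesis
      using one_minus_mult_sum_power_diff[of "q!1 + 2" n weight] \<open>q!1 \<in> {1..Suc k}\<close> by (simp add: n_def)
  qed
  have "(1 - weight) * weighted_clusters n =
      - (\<Sum>q\<in>clusters (Suc k). of_int (cluster_sign q) * ((1 - weight) * (\<Sum>v = q!1 + 2..n. weight ^ (n - v))))
      - of_int (signed_clusters k) * ((1 - weight) * (\<Sum>v = 4..n. weight ^ (n - v)))"
    unfolding weighted_clusters_def sum_clusters_by_second_entry[OF n(1), of "\<lambda>v. weight ^ (n - v)"] n(2,3)
    by (simp add: algebra_simps sum_distrib_left)
  also have "\<dots> = - (\<Sum>q\<in>clusters (Suc k). of_int (cluster_sign q) * (1 - weight * weight ^ (Suc k - q!1)))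
      - of_int (signed_clusters k) * (1 - weight ^ k)"
    using geo one_minus_mult_sum_power_diff[of 4 n weight] n by simp
  also have "\<dots> = weight * weighted_clusters (Suc k) - of_int (signed_clusters (Suc k))
      - of_int (signed_clusters k) * (1 - weight ^ k)"
    by (simp add: weighted_clusters_def signed_clusters_def right_diff_distrib sum_subtractf
        sum_distrib_left of_int_sum mult.left_commute)
  finally show ?thesis by (simp add: n_def)
qed

lemma Bfun_X: "Bfun fps_X = fps_X * weight"
  by (simp add: Bfun_def weight_def fps_divide_unit)

lemma fps_const_cluster_gf: "0 < m \<Longrightarrow> fps_const (cluster_gf $ m) = of_int (signed_clusters m)"
  by (simp add: cluster_gf_def fps_of_int)

lemma X_power_weighted_clusters_rec:
  assumes "2 \<le> k"
  shows "weight * (fps_X ^ Suc (Suc (Suc k)) * weighted_clusters (Suc (Suc (Suc k)))) =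
    weight * (fps_X ^ Suc k * weighted_clusters (Suc k))
    - fps_const (cluster_gf $ Suc k) * fps_X ^ Suc k
    - fps_X * (fps_const (cluster_gf $ k) * (fps_X ^ k - Bj 1 ^ k))"
proof -
  have "weight * (fps_X ^ Suc (Suc (Suc k)) * weighted_clusters (Suc (Suc (Suc k)))) =
      fps_X ^ Suc k * ((1 - weight) * weighted_clusters (Suc (Suc (Suc k))))"
    unfolding one_minus_weight by (simp add: power2_eq_square mult_ac)
  also have "\<dots> = fps_X ^ Suc k * (weight * weighted_clusters (Suc k) - of_int (signed_clusters (Suc k))
      - of_int (signed_clusters k) * (1 - weight ^ k))"
    using weighted_clusters_rec[OF assms] by simp
  also have "\<dots> = weight * (fps_X ^ Suc k * weighted_clusters (Suc k))
    - fps_const (cluster_gf $ Suc k) * fps_X ^ Suc k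
    - fps_X * (fps_const (cluster_gf $ k) * (fps_X ^ k - Bj 1 ^ k))"
    using assms by (simp add: fps_const_cluster_gf Bfun_X power_mult_distrib algebra_simps)
  finally show ?thesis .
qed

lemma fps_cutoff_Suc: "fps_cutoff (Suc n) f = fps_cutoff n f + fps_const (f $ n) * fps_X ^ n"
  by (rule fps_ext) (auto simp: less_Suc_eq)

lemma fps_monom_compose:
  fixes B :: "'a::idom fps"
  assumes "B $ 0 = 0"
  shows "(fps_const c * fps_X ^ n) oo B = fps_const c * B ^ n"
  using assms by (simp add: fps_const_mult_apply_left[symmetric] fps_compose_power[symmetric])

lemma Bj_nth_0: "Bj j $ 0 = 0"
  by (induction j) (simp_all add: Bfun_def fps_divide_unit power2_eq_square)

lemma fps_cutoff_cluster_gf_3: "n \<le> 3 \<Longrightarrow> fps_cutoff n cluster_gf = 0"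
  by (rule fps_ext) (auto simp: cluster_gf_def signed_clusters_def clusters_empty)

lemma weighted_clusters_3: "weighted_clusters 3 = 0"
  by (simp add: weighted_clusters_def clusters_empty)

lemma weighted_clusters_4: "weighted_clusters 4 = -1"
  by (simp add: weighted_clusters_def clusters_4 cluster_sign_def occ1423_1423[simplified])

lemma weighted_clusters_telescope:
  assumes "2 \<le> k"
  shows "weight * (fps_X ^ Suc k * weighted_clusters (Suc k)
      + fps_X ^ Suc (Suc k) * weighted_clusters (Suc (Suc k))) + weight * fps_X ^ 4 =
    - fps_cutoff (Suc k) cluster_gf - fps_X * (fps_cutoff k cluster_gf - (fps_cutoff k cluster_gf oo Bj 1))"
  using assms
proof (induction k rule: nat_induct_at_least)
  case base
  then show ?case
    by (simp add: weighted_clusters_3 weighted_clusters_4 fps_cutoff_cluster_gf_3)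
next
  case (Suc k)
  let ?c = "\<lambda>m. fps_const (cluster_gf $ m)" and ?C = "\<lambda>m. fps_cutoff m cluster_gf"
    and ?R = "\<lambda>m. fps_X ^ m * weighted_clusters m"
  have cut: "?C (Suc k) = ?C k + ?c k * fps_X ^ k" "?C (Suc (Suc k)) = ?C (Suc k) + ?c (Suc k) * fps_X ^ Suc k"
    by (rule fps_cutoff_Suc)+
  have comp: "?C (Suc k) oo Bj 1 = (?C k oo Bj 1) + ?c k * Bj 1 ^ k"
    unfolding cut(1) fps_compose_add_distrib fps_monom_compose[OF Bj_nth_0] ..
  have "weight * (?R (Suc (Suc k)) + ?R (Suc (Suc (Suc k)))) + weight * fps_X ^ 4 =
      (weight * (?R (Suc k) + ?R (Suc (Suc k))) + weight * fps_X ^ 4)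
      + (weight * ?R (Suc (Suc (Suc k))) - weight * ?R (Suc k))"
    by (simp add: algebra_simps)
  also have "\<dots> = (- ?C (Suc k) - fps_X * (?C k - (?C k oo Bj 1)))
      - (?c (Suc k) * fps_X ^ Suc k + fps_X * (?c k * (fps_X ^ k - Bj 1 ^ k)))"
    unfolding Suc.IH X_power_weighted_clusters_rec[OF Suc.hyps] by (simp add: algebra_simps)
  also have "\<dots> = - ?C (Suc (Suc k)) - fps_X * (?C (Suc k) - (?C (Suc k) oo Bj 1))"
    unfolding comp cut(2) unfolding cut(1) by (simp add: algebra_simps)
  finally show ?case .
qed

lemma fps_cutoff_compose_nth:
  assumes "j < n"
  shows "(fps_cutoff n f oo B) $ j = (f oo B) $ j"
  using assms by (auto simp: fps_compose_nth intro!: sum.cong)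

lemma cluster_gf_functional_eq:
  "weight * fps_X ^ 4 = fps_X * (cluster_gf oo Bj 1) - (1 + fps_X) * cluster_gf"
proof (rule fps_ext)
  fix k
  let ?G = cluster_gf and ?C = "\<lambda>m. fps_cutoff m cluster_gf"
  have tele: "fps_X ^ Suc (Suc (Suc k)) * (weight * (weighted_clusters (Suc (Suc (Suc k)))
        + fps_X * weighted_clusters (Suc (Suc (Suc (Suc k)))))) + weight * fps_X ^ 4 =
      - ?C (Suc (Suc (Suc k))) - fps_X * (?C (Suc (Suc k)) - (?C (Suc (Suc k)) oo Bj 1))"
    using weighted_clusters_telescope[of "Suc (Suc k)"] by (simp add: algebra_simps)
  have "(weight * fps_X ^ 4) $ k =
      (- ?C (Suc (Suc (Suc k))) - fps_X * (?C (Suc (Suc k)) - (?C (Suc (Suc k)) oo Bj 1))) $ k"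
  proof -
    have "(fps_X ^ Suc (Suc (Suc k)) * (weight * (weighted_clusters (Suc (Suc (Suc k)))
        + fps_X * weighted_clusters (Suc (Suc (Suc (Suc k))))))) $ k = 0"
      by (simp only: fps_X_power_mult_nth) simp
    then show ?thesis using arg_cong[OF tele, of "\<lambda>f. f $ k"] unfolding fps_add_nth by simp
  qed
  also have "\<dots> = (fps_X * (?G oo Bj 1) - (1 + fps_X) * ?G) $ k"
    by (simp add: algebra_simps fps_cutoff_compose_nth del: Bj.simps)
  finally show "(weight * fps_X ^ 4) $ k = (fps_X * (?G oo Bj 1) - (1 + fps_X) * ?G) $ k" .
qed

lemma T_clust_eq: "T_clust = 1 + fps_X + cluster_gf"
proof (rule fps_ext)
  fix n
  have "t_clust 1 = 1" "t_clust 2 = 0" "t_clust 3 = 0" by (simp_all add: t_clust_def s_clust_def)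
  moreover have "signed_clusters n = 0" if "0 < n" "n < 4"
    using that by (simp add: signed_clusters_def clusters_empty)
  ultimately show "T_clust $ n = (1 + fps_X + cluster_gf) $ n"
    by (cases "n < 4")
      (auto simp: T_clust_def cluster_gf_def t_clust_eq_signed_clusters fps_X_def less_Suc_eq numeral_eq_Suc)
qed

lemma T_clust_functional_eq: "T_clust = 1 + fps_X / (1 + fps_X) * (T_clust oo Bj 1)"
proof -
  let ?U = "fps_X + cluster_gf"
  have "fps_X * (1 + (?U oo Bj 1)) = fps_X + fps_X * Bj 1 + fps_X * (cluster_gf oo Bj 1)"
    by (simp add: fps_compose_add_distrib Bj_nth_0 algebra_simps del: Bj.simps)
  also have "\<dots> = fps_X + fps_X ^ 2 * (weight * (1 + fps_X ^ 2)) + (1 + fps_X) * cluster_gf"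
    using cluster_gf_functional_eq by (simp add: Bfun_X algebra_simps eval_nat_numeral)
  also have "\<dots> = (1 + fps_X) * ?U"
    unfolding weight_mult by (simp add: algebra_simps eval_nat_numeral)
  finally have U: "(1 + fps_X) * ?U = fps_X * (T_clust oo Bj 1)"
    by (simp add: T_clust_eq fps_compose_add_distrib add.assoc)
  have "fps_X / (1 + fps_X) * (T_clust oo Bj 1) = inverse (1 + fps_X) * ((1 + fps_X) * ?U)"
    unfolding U by (simp add: fps_divide_unit mult_ac)
  also have "\<dots> = ?U"
    by (simp add: mult.assoc[symmetric] inverse_mult_eq_1)
  finally show ?thesis by (simp add: T_clust_eq)
qed

subsection \<open>Iterating the functional equation\<close>

lemma Bj_ratio_eq: "Bj j / (1 + Bj j) = Bj j * inverse (1 + Bj j)"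
  by (rule fps_divide_unit) (simp add: Bj_nth_0)

lemma Bj_ratio_nth_0: "(Bj j / (1 + Bj j)) $ 0 = 0"
  by (simp add: Bj_ratio_eq Bj_nth_0 del: Bj.simps)

lemma Bj_1_compose: "Bj 1 oo Bj j = Bj (Suc j)"
proof -
  have "(1 + fps_X ^ 2) oo Bj j = 1 + Bj j ^ 2"
    by (simp add: fps_compose_add_distrib fps_compose_power[symmetric] Bj_nth_0 del: Bj.simps)
  then have "Bj 1 oo Bj j = Bj j * inverse (1 + Bj j ^ 2)"
    by (simp add: Bfun_X weight_def fps_compose_mult_distrib Bj_nth_0 fps_inverse_compose)
  then show ?thesis by (simp add: Bfun_def fps_divide_unit Bj_nth_0 power2_eq_square)
qed

lemma T_clust_compose_Bj: "T_clust oo Bj j = 1 + Bj j / (1 + Bj j) * (T_clust oo Bj (Suc j))"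
proof -
  have "(fps_X / (1 + fps_X)) oo Bj j = Bj j / (1 + Bj j)"
    by (simp add: fps_divide_unit fps_compose_mult_distrib fps_inverse_compose fps_compose_add_distrib
        Bj_nth_0 Bj_ratio_eq del: Bj.simps)
  moreover have "(T_clust oo Bj 1) oo Bj j = T_clust oo Bj (Suc j)"
    unfolding Bj_1_compose[symmetric] by (rule fps_compose_assoc[symmetric]) (simp_all add: Bj_nth_0 Bfun_X)
  moreover have "T_clust oo Bj j = (1 + fps_X / (1 + fps_X) * (T_clust oo Bj 1)) oo Bj j"
    using T_clust_functional_eq by simp
  ultimately show ?thesis
    by (simp add: fps_compose_add_distrib fps_compose_mult_distrib Bj_nth_0 del: Bj.simps)
qed

lemma T_clust_partial_sums:
  "T_clust - 1 = (\<Sum>n<N. \<Prod>j\<le>n. Bj j / (1 + Bj j))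
     + (\<Prod>j\<le>N. Bj j / (1 + Bj j)) * (T_clust oo Bj (Suc N))"
proof (induction N)
  case 0
  have "T_clust - 1 = fps_X / (1 + fps_X) * (T_clust oo Bj 1)"
    using T_clust_functional_eq by (metis add_diff_cancel_left')
  then show ?case by simp
next
  case (Suc N)
  let ?P = "\<Prod>j\<le>N. Bj j / (1 + Bj j)"
  have "?P * (T_clust oo Bj (Suc N)) = ?P + (\<Prod>j\<le>Suc N. Bj j / (1 + Bj j)) * (T_clust oo Bj (Suc (Suc N)))"
    unfolding T_clust_compose_Bj[of "Suc N"] by (simp add: algebra_simps del: Bj.simps)
  then show ?case using Suc.IH by (simp add: add.assoc del: Bj.simps)
qed

lemma prod_Bj_ratio_nth:
  "i \<le> N \<Longrightarrow> (\<Prod>j\<le>N. Bj j / (1 + Bj j)) $ i = 0"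
proof (induction N arbitrary: i)
  case 0
  then show ?case using Bj_ratio_nth_0[of 0] by simp
next
  case (Suc N)
  show ?case
    unfolding prod.atMost_Suc fps_mult_nth
  proof (rule sum.neutral, intro ballI)
    fix m assume "m \<in> {0..i}"
    then show "(\<Prod>j\<le>N. Bj j / (1 + Bj j)) $ m * (Bj (Suc N) / (1 + Bj (Suc N))) $ (i - m) = 0"
      using Suc.IH[of m] Suc.prems Bj_ratio_nth_0[of "Suc N"] by (cases "m \<le> N") auto
  qed
qed

theorem theorem2p4:
  shows "(\<lambda>n. \<Prod>j\<le>n. Bj j / (1 + Bj j)) sums (T_clust - 1)"
  unfolding sums_def
proof (rule tendsto_fpsI)
  fix k
  show "eventually (\<lambda>N. (\<Sum>n<N. \<Prod>j\<le>n. Bj j / (1 + Bj j)) $ k = (T_clust - 1) $ k) sequentially"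
  proof (rule eventually_sequentiallyI)
    fix N assume "k \<le> N"
    have "((\<Prod>j\<le>N. Bj j / (1 + Bj j)) * (T_clust oo Bj (Suc N))) $ k = 0"
      unfolding fps_mult_nth using prod_Bj_ratio_nth \<open>k \<le> N\<close> by (auto intro!: sum.neutral)
    then show "(\<Sum>n<N. \<Prod>j\<le>n. Bj j / (1 + Bj j)) $ k = (T_clust - 1) $ k"
      using arg_cong[OF T_clust_partial_sums[of N], of "\<lambda>f. f $ k"] by simp
  qed
qed

end
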